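(* Let $n>2$ be an integer, $a\in\mathbb{R}$ with $a\ne0$, and for $c\in\mathbb{R}$ let \[\lambda_\pm(c)=\tfrac12\Bigl(2a-(n-1)c\pm\sqrt{\bigl(2a+(n+1)c\bigr)^2+4n}\Bigr),\qquad \lambda_{\lim}(c)=c-2a.\] Put $\varphi=2\pi/n$, $q=\lfloor n/2\rfloor$ and $c_k=\dfrac{4a^2\cos(k\varphi)(1-\cos(k\varphi))+n}{2(n+1)a(\cos(k\varphi)-1)}$ for $k=1,\dots,q$. If $a>0$, let $c_-$ be the abscissa of the point where $\lambda_-(c)=\lambda_{\lim}(c)$; if $a<0$, let $c_+$ be the abscissa of the point where $\lambda_+(c)=\lambda_{\lim}(c)$. Then all $c_k$, $k=1,\dots,q$, lie in $(-\infty,c_-]$ when $a>0$, and in $[c_+,\infty)$ when $a<0$.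
   Context: $\lambda_\pm(c)$ and $c+2a\cos(k\varphi)$ are the eigenvalues of the $(n+1)\times(n+1)$ symmetric matrix $m_n(a,\pm1,c)$ (rows/columns indexed $0,\dots,n$, $(0,0)$-entry $-nc$, $(0,j)$- and $(j,0)$-entries $\pm1$, lower-right block $\mathrm{circ}(c,a,0,\dots,0,a)$); $c_k$ is the abscissa at which the curve $\lambda=c+2a\cos(k\varphi)$ meets $\lambda=\lambda_-(c)$ (if $a>0$) or $\lambda=\lambda_+(c)$ (if $a<0$). *)

theory Defs
  imports Complex_Main
begin

definition lam_plus :: "nat \<Rightarrow> real \<Rightarrow> real \<Rightarrow> real" where
  "lam_plus n a c = (2*a - (real n - 1)*c + sqrt ((2*a + (real n + 1)*c)^2 + 4 * real n)) / 2"

definition lam_minus :: "nat \<Rightarrow> real \<Rightarrow> real \<Rightarrow> real" where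
  "lam_minus n a c = (2*a - (real n - 1)*c - sqrt ((2*a + (real n + 1)*c)^2 + 4 * real n)) / 2"

definition lam_lim :: "real \<Rightarrow> real \<Rightarrow> real" where
  "lam_lim a c = c - 2*a"

definition ck :: "nat \<Rightarrow> real \<Rightarrow> nat \<Rightarrow> real" where
  "ck n a k = (let t = cos (real k * (2*pi / real n)) in
     (4*a^2*t*(1 - t) + real n) / (2*(real n + 1)*a*(t - 1)))"

end

theory Submission
  imports Defs
begin

text \<open>Writing \<open>u = (n+1) c\<close>, both equations \<open>\<lambda>\<^sub>\<plusminus>(c) = \<lambda>\<^sub>l\<^sub>i\<^sub>m(c)\<close> say
  \<open>\<surd>((2a+u)\<^sup>2 + 4n) = sgn a \<cdot> (6a - u)\<close>; squaring leaves a linear equation in \<open>u\<close>, whose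
  root makes the right-hand side positive, so the crossing point \<open>c\<^sub>\<plusminus> = (8a\<^sup>2 - n)/(4a(n+1))\<close>
  is unique. It is the value of the formula for \<open>c\<^sub>k\<close> at \<open>cos(k\<phi>) = -1\<close>, and on \<open>[-1,1)\<close>
  the factor \<open>(4a\<^sup>2t(1-t) + n)/(t-1)\<close> of that formula is maximal at \<open>t = -1\<close>; dividing by
  \<open>2(n+1)a\<close> keeps or reverses this according to the sign of \<open>a\<close>.\<close>

definition lam_crossing :: "nat \<Rightarrow> real \<Rightarrow> real" where
  "lam_crossing n a = (8*a^2 - real n) / (4*a*(real n + 1))"

lemma sqrt_discriminant_eq_iff:
  fixes a u N :: real
  assumes N: "N > 0" and a: "a \<noteq> 0"
  shows "sqrt ((2*a + u)^2 + 4*N) = sgn a * (6*a - u) \<longleftrightarrow> u = 2*a - N/(4*a)"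
proof
  assume "sqrt ((2*a + u)^2 + 4*N) = sgn a * (6*a - u)"
  then have "(2*a + u)^2 + 4*N = (sgn a * (6*a - u))^2"
    by (metis N add_nonneg_nonneg less_eq_real_def real_sqrt_pow2 zero_le_mult_iff
        zero_le_numeral zero_le_power2)
  also have "\<dots> = (6*a - u)^2"
    using a by (cases "a > 0") (auto simp: power_mult_distrib power2_commute)
  finally have "16*a*u = 32*a^2 - 4*N"
    by (simp add: power2_eq_square algebra_simps)
  then show "u = 2*a - N/(4*a)"
    using a by (simp add: field_simps power2_eq_square)
next
  assume u: "u = 2*a - N/(4*a)"
  have root: "sgn a * (6*a - u) = 4*\<bar>a\<bar> + N/(4*\<bar>a\<bar>)"
    unfolding u using a by (cases "a > 0") (auto simp: field_simps)
  have "(2*a + u)^2 + 4*N = (4*a + N/(4*a))^2"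
    unfolding u using a by (simp add: field_simps power2_eq_square)
  also have "\<dots> = (4*\<bar>a\<bar> + N/(4*\<bar>a\<bar>))^2"
    using a by (cases "a > 0") (auto simp: field_simps power2_eq_square)
  finally show "sqrt ((2*a + u)^2 + 4*N) = sgn a * (6*a - u)"
    unfolding root using N by (intro real_sqrt_unique) auto
qed

lemma lam_crossing_iff:
  assumes "a \<noteq> 0"
  shows "(real n + 1)*c = 2*a - real n/(4*a) \<longleftrightarrow> c = lam_crossing n a"
proof -
  have "lam_crossing n a = (2*a - real n/(4*a)) / (real n + 1)"
    using assms unfolding lam_crossing_def by (simp add: field_simps power2_eq_square)
  moreover have "real n + 1 \<noteq> 0" by simp
  ultimately show ?thesis
    by (metis eq_divide_eq mult.commute)
qed

lemma lam_minus_eq_lam_lim_iff: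
  assumes "n > 0" and "a > 0"
  shows "lam_minus n a c = lam_lim a c \<longleftrightarrow> c = lam_crossing n a"
proof -
  have "lam_minus n a c = lam_lim a c
      \<longleftrightarrow> sqrt ((2*a + (real n + 1)*c)^2 + 4*real n) = sgn a * (6*a - (real n + 1)*c)"
    using assms unfolding lam_minus_def lam_lim_def by (auto simp: field_simps)
  also have "\<dots> \<longleftrightarrow> (real n + 1)*c = 2*a - real n/(4*a)"
    using assms by (intro sqrt_discriminant_eq_iff) auto
  also have "\<dots> \<longleftrightarrow> c = lam_crossing n a"
    using assms by (intro lam_crossing_iff) auto
  finally show ?thesis .
qed

lemma lam_plus_eq_lam_lim_iff:
  assumes "n > 0" and "a < 0"
  shows "lam_plus n a c = lam_lim a c \<longleftrightarrow> c = lam_crossing n a"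
proof -
  have "lam_plus n a c = lam_lim a c
      \<longleftrightarrow> sqrt ((2*a + (real n + 1)*c)^2 + 4*real n) = sgn a * (6*a - (real n + 1)*c)"
    using assms unfolding lam_plus_def lam_lim_def by (auto simp: field_simps)
  also have "\<dots> \<longleftrightarrow> (real n + 1)*c = 2*a - real n/(4*a)"
    using assms by (intro sqrt_discriminant_eq_iff) auto
  also have "\<dots> \<longleftrightarrow> c = lam_crossing n a"
    using assms by (intro lam_crossing_iff) auto
  finally show ?thesis .
qed

lemma ck_numerator_le:
  fixes a t N :: real
  assumes "N \<ge> 0" and "-1 \<le> t" and "t < 1"
  shows "(4*a^2*t*(1 - t) + N) / (t - 1) \<le> (8*a^2 - N) / 2"
proof -
  define s where "s = 1 - t"
  have s: "0 < s" "s \<le> 2"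
    using assms unfolding s_def by auto
  have "(4*a^2*t*(1 - t) + N) / (t - 1) = (8*a^2 - N)/2 + 4*a^2*(s - 2) - (N/s - N/2)"
    using s by (simp add: s_def field_simps)
  moreover have "4*a^2*(s - 2) \<le> 0"
    using s by (simp add: mult_nonneg_nonpos)
  moreover have "N/2 \<le> N/s"
    using s assms(1) by (intro divide_left_mono) auto
  ultimately show ?thesis by linarith
qed

lemma cos_two_pi_div_lt_one:
  assumes "k \<ge> 1" and "2*k \<le> n"
  shows "cos (real k * (2*pi / real n)) < 1"
proof -
  have "0 < real k * (2*pi / real n)" and "real k * (2*pi / real n) \<le> pi"
    using assms by (auto simp: field_simps)
  then have "cos (real k * (2*pi / real n)) < cos 0"
    by (intro cos_monotone_0_pi) auto
  then show ?thesis by simp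
qed

lemma ck_le_lam_crossing:
  assumes "a > 0" and "k \<in> {1..n div 2}"
  shows "ck n a k \<le> lam_crossing n a"
proof -
  define t where "t = cos (real k * (2*pi / real n))"
  have "(4*a^2*t*(1 - t) + real n) / (t - 1) \<le> (8*a^2 - real n) / 2"
    using cos_two_pi_div_lt_one[of k n] assms(2) unfolding t_def by (intro ck_numerator_le) auto
  then have "(4*a^2*t*(1 - t) + real n) / (t - 1) / (2*(real n + 1)*a)
      \<le> (8*a^2 - real n) / 2 / (2*(real n + 1)*a)"
    using assms(1) by (intro divide_right_mono) auto
  then show ?thesis
    unfolding ck_def lam_crossing_def Let_def t_def[symmetric] by (simp add: field_simps)
qed

lemma lam_crossing_le_ck:
  assumes "a < 0" and "k \<in> {1..n div 2}"
  shows "lam_crossing n a \<le> ck n a k"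
proof -
  define t where "t = cos (real k * (2*pi / real n))"
  have "(4*a^2*t*(1 - t) + real n) / (t - 1) \<le> (8*a^2 - real n) / 2"
    using cos_two_pi_div_lt_one[of k n] assms(2) unfolding t_def by (intro ck_numerator_le) auto
  then have "(8*a^2 - real n) / 2 / (2*(real n + 1)*a)
      \<le> (4*a^2*t*(1 - t) + real n) / (t - 1) / (2*(real n + 1)*a)"
    using assms(1) mult_pos_neg[of "2*(real n + 1)" a] by (intro divide_right_mono_neg) auto
  then show ?thesis
    unfolding ck_def lam_crossing_def Let_def t_def[symmetric] by (simp add: field_simps)
qed

theorem corollary3:
  fixes n :: nat and a :: real
  assumes "n > 2" and "a \<noteq> 0"
  shows "(a > 0 \<longrightarrow>
            (\<exists>!c. lam_minus n a c = lam_lim a c) \<and>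
            (\<forall>k \<in> {1..n div 2}. ck n a k \<le> (THE c. lam_minus n a c = lam_lim a c)))
       \<and> (a < 0 \<longrightarrow>
            (\<exists>!c. lam_plus n a c = lam_lim a c) \<and>
            (\<forall>k \<in> {1..n div 2}. (THE c. lam_plus n a c = lam_lim a c) \<le> ck n a k))"
proof (intro conjI impI)
  assume a: "a > 0"
  have crossing: "lam_minus n a c = lam_lim a c \<longleftrightarrow> c = lam_crossing n a" for c
    using assms(1) a by (intro lam_minus_eq_lam_lim_iff) auto
  then show "\<exists>!c. lam_minus n a c = lam_lim a c" by auto
  show "\<forall>k \<in> {1..n div 2}. ck n a k \<le> (THE c. lam_minus n a c = lam_lim a c)"
    unfolding crossing using a by (auto intro: ck_le_lam_crossing)
next
  assume a: "a < 0"
  have crossing: "lam_plus n a c = lam_lim a c \<longleftrightarrow> c = lam_crossing n a" for c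
    using assms(1) a by (intro lam_plus_eq_lam_lim_iff) auto
  then show "\<exists>!c. lam_plus n a c = lam_lim a c" by auto
  show "\<forall>k \<in> {1..n div 2}. (THE c. lam_plus n a c = lam_lim a c) \<le> ck n a k"
    unfolding crossing using a by (auto intro: lam_crossing_le_ck)
qed

end
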